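(* For every $n\ge1$ and every $\mu$, \[ E_{\mu+n-1}\,E_{\mu+n-2,1}\cdots E_{\mu+1,n-2}\,E_{\mu,n-1}\;\circ\;F_{\mu,n-1}\,F_{\mu+1,n-2}\cdots F_{\mu+n-2,1}\,F_{\mu+n-1} =[\mu+n][\mu+n-1]\cdots[\mu+1]\;\mathrm{Id}_{M(\mu+n)} . \]
   Context: Let $\mathbb{K}=\mathbb{C}(q,q^{\mu})$, where $q$ and $q^{\mu}$ are algebraically independent indeterminates; $[a]=\frac{q^{a}-q^{-a}}{q-q^{-1}}$. $V_1$ is the 2-dimensional $U_q(\mathfrak{sl}_2)$-module with basis $v_0,v_1$. For $\lambda=\mu+k$ ($k\in\mathbb{Z}$), the Verma module $M(\lambda)$ has $\mathbb{K}$-basis $v_0,v_1,\dots$ with $Kv_i=q^{\lambda-2i}v_i$, $Ev_i=[i]v_{i-1}$, $Fv_i=[\lambda-i]v_{i+1}$, $v_{-1}=0$. For each such $\lambda$, the linear maps $E_\lambda: M(\lambda)\otimes V_1\to M(\lambda+1)$ and $F_\lambda: M(\lambda+1)\to M(\lambda)\otimes V_1$ are defined by $E_\lambda(v_i\otimes v_0)=q^iv_i$, $E_\lambda(v_i\otimes v_1)=v_{i+1}$, $F_\lambda(v_i)=[\lambda+1-i]\,v_i\otimes v_0+q^{i-\lambda-1}[i]\,v_{i-1}\otimes v_1$. For $j\ge0$ set $E_{\lambda,j}=E_\lambda\otimes\mathrm{Id}_{V_1}^{\otimes j}: M(\lambda)\otimes V_1^{\otimes (j+1)}\to M(\lambda+1)\otimes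 V_1^{\otimes j}$ and $F_{\lambda,j}=F_\lambda\otimes\mathrm{Id}_{V_1}^{\otimes j}: M(\lambda+1)\otimes V_1^{\otimes j}\to M(\lambda)\otimes V_1^{\otimes(j+1)}$, with $E_{\lambda,0}=E_\lambda$, $F_{\lambda,0}=F_\lambda$. Compositions are read right to left. *)

theory Defs
  imports "HOL-Computational_Algebra.Polynomial" "HOL-Computational_Algebra.Fraction_Field"
begin

text \<open>The field K = C(q, q^mu): fractions of bivariate complex polynomials,
  represented as polynomials in Q = q^mu whose coefficients are polynomials in q.\<close>
type_synonym K = "complex poly poly fract"

definition qq :: K where "qq = Fract [:[:0, 1:]:] 1"
definition qmu :: K where "qmu = Fract [:0, 1:] 1"

definition qint :: "int \<Rightarrow> K" where
  "qint a = (qq powi a - qq powi (- a)) / (qq - inverse qq)"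

definition qmuint :: "int \<Rightarrow> K" where
  "qmuint k = (qmu * qq powi k - inverse (qmu * qq powi k)) / (qq - inverse qq)"

text \<open>Basis of M(lambda) \<otimes> V_1^{\<otimes> j}: (i, w) stands for v_i \<otimes> v_{w_1} \<otimes> ... \<otimes> v_{w_j},
  where False = v_0 and True = v_1 (j = length w).\<close>
type_synonym basis = "nat \<times> bool list"
type_synonym vec = "basis \<Rightarrow> K"

definition delta :: "basis \<Rightarrow> vec" where
  "delta b = (\<lambda>c. if c = b then 1 else 0)"

definition lin :: "(basis \<Rightarrow> vec) \<Rightarrow> vec \<Rightarrow> vec" where
  "lin f v = (\<lambda>c. \<Sum>b\<in>{b. v b \<noteq> 0}. v b * f b c)"

text \<open>E_{lambda,j} on basis vectors (it does not depend on lambda):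
  v_i \<otimes> v_0 \<otimes> rest \<mapsto> q^i v_i \<otimes> rest,  v_i \<otimes> v_1 \<otimes> rest \<mapsto> v_{i+1} \<otimes> rest.\<close>
fun Ebas :: "basis \<Rightarrow> vec" where
  "Ebas (i, []) = (\<lambda>_. 0)"
| "Ebas (i, a # rest) = (if a then delta (i + 1, rest) else (\<lambda>c. qq ^ i * delta (i, rest) c))"

text \<open>F_{lambda,j} for lambda = mu + k on basis vectors:
  v_i \<otimes> rest \<mapsto> [lambda+1-i] v_i \<otimes> v_0 \<otimes> rest + q^(i-lambda-1) [i] v_{i-1} \<otimes> v_1 \<otimes> rest.\<close>
definition Fbas :: "int \<Rightarrow> basis \<Rightarrow> vec" where
  "Fbas k b = (case b of (i, rest) \<Rightarrow>
     (\<lambda>c. qmuint (k + 1 - int i) * delta (i, False # rest) c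
        + (if i = 0 then 0
           else qq powi (int i - k - 1) * inverse qmu * qint (int i) * delta (i - 1, True # rest) c)))"

definition Emap :: "int \<Rightarrow> vec \<Rightarrow> vec" where "Emap k = lin Ebas"
definition Fmap :: "int \<Rightarrow> vec \<Rightarrow> vec" where "Fmap k = lin (Fbas k)"

text \<open>With base weight mu + m:
  Fchain n m = F_{mu+m,n-1} o ... o F_{mu+m+n-2,1} o F_{mu+m+n-1} (F_{mu+m+n-1} applied first),
  Echain n m = E_{mu+m+n-1} o ... o E_{mu+m+1,n-2} o E_{mu+m,n-1} (E_{mu+m,n-1} applied first).\<close>
definition Fchain :: "nat \<Rightarrow> int \<Rightarrow> vec \<Rightarrow> vec" where
  "Fchain n m v = foldl (\<lambda>w k. Fmap (m + int k) w) v (rev [0..<n])"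

definition Echain :: "nat \<Rightarrow> int \<Rightarrow> vec \<Rightarrow> vec" where
  "Echain n m v = foldl (\<lambda>w k. Emap (m + int k) w) v [0..<n]"

text \<open>Elements of M(lambda) (no V_1 tensor factors), finitely supported.\<close>
definition inM :: "vec \<Rightarrow> bool" where
  "inM v \<longleftrightarrow> finite {b. v b \<noteq> 0} \<and> (\<forall>b. v b \<noteq> 0 \<longrightarrow> snd b = [])"

end

theory Submission
  imports Defs
begin

text \<open>Each map E_{\<lambda>,j} F_{\<lambda>,j} acts on M(\<lambda>+1) \<otimes> V_1^{\<otimes>j} as the scalar [\<lambda>+1]: on a basis
  vector v_i \<otimes> w, F produces v_i \<otimes> v_0 \<otimes> w and v_{i-1} \<otimes> v_1 \<otimes> w, and E sends both back to
  v_i \<otimes> w, with total coefficient [\<lambda>+1-i] q^i + q^{i-\<lambda>-1} [i] = [\<lambda>+1]. The composite in the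
  theorem is nested, E_{\<mu>+n-1} \<dots> (E_{\<mu>,n-1} F_{\<mu>,n-1}) \<dots> F_{\<mu>+n-1}, so the innermost pair
  collapses to [\<mu>+1] and induction on n gives the product [\<mu>+n] \<cdots> [\<mu>+1].\<close>

definition supp :: "vec \<Rightarrow> basis set" where
  "supp v = {b. v b \<noteq> 0}"

lemma lin_eq_sum_superset:
  assumes "finite S" "supp v \<subseteq> S"
  shows "lin f v c = (\<Sum>b\<in>S. v b * f b c)"
  unfolding lin_def using assms
  by (intro sum.mono_neutral_left) (auto simp: supp_def)

lemma lin_scale: "lin f (\<lambda>b. a * v b) = (\<lambda>c. a * lin f v c)"
  by (cases "a = 0") (simp_all add: lin_def sum_distrib_left mult.assoc)

lemma supp_lin_subset: "supp (lin f v) \<subseteq> (\<Union>b\<in>supp v. supp (f b))"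
proof
  fix c assume "c \<in> supp (lin f v)"
  then have "(\<Sum>b\<in>supp v. v b * f b c) \<noteq> 0"
    by (simp add: supp_def lin_def)
  then obtain b where b: "b \<in> supp v" "v b * f b c \<noteq> 0"
    by (rule sum.not_neutral_contains_not_neutral)
  then have "c \<in> supp (f b)"
    by (simp add: supp_def)
  with b(1) show "c \<in> (\<Union>b\<in>supp v. supp (f b))"
    by (rule UN_I)
qed

lemma finite_supp_lin:
  assumes "finite (supp v)" "\<And>b. finite (supp (f b))"
  shows "finite (supp (lin f v))"
  using assms by (blast intro: finite_subset[OF supp_lin_subset])

lemma lin_lin:
  assumes "finite (supp v)" "\<And>b. finite (supp (f b))"
  shows "lin g (lin f v) = lin (\<lambda>b. lin g (f b)) v"
proof
  fix c
  define S where "S = (\<Union>b\<in>supp v. supp (f b))"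
  have "finite S" using assms by (simp add: S_def)
  have f_sub: "supp (f b) \<subseteq> S" if "b \<in> supp v" for b
    using that by (auto simp: S_def)
  have "lin g (lin f v) c = (\<Sum>b'\<in>S. lin f v b' * g b' c)"
    using \<open>finite S\<close> supp_lin_subset[of f v] unfolding S_def by (rule lin_eq_sum_superset)
  also have "\<dots> = (\<Sum>b'\<in>S. \<Sum>b\<in>supp v. v b * (f b b' * g b' c))"
    by (simp add: lin_def supp_def sum_distrib_right mult.assoc)
  also have "\<dots> = (\<Sum>b\<in>supp v. v b * (\<Sum>b'\<in>S. f b b' * g b' c))"
    by (subst sum.swap) (simp add: sum_distrib_left)
  also have "\<dots> = (\<Sum>b\<in>supp v. v b * lin g (f b) c)"
    using lin_eq_sum_superset[OF \<open>finite S\<close> f_sub] by simp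
  also have "\<dots> = lin (\<lambda>b. lin g (f b)) v c"
    by (simp add: lin_def supp_def)
  finally show "lin g (lin f v) c = lin (\<lambda>b. lin g (f b)) v c" .
qed

lemma lin_scaled_delta:
  assumes "finite (supp v)"
  shows "lin (\<lambda>b c. a * delta b c) v = (\<lambda>c. a * v c)"
proof
  fix c
  have "lin (\<lambda>b c. a * delta b c) v c = (\<Sum>b\<in>supp v. if b = c then a * v c else 0)"
    by (intro trans[OF lin_eq_sum_superset[OF assms subset_refl]] sum.cong)
       (auto simp: delta_def)
  also have "\<dots> = a * v c"
    using assms by (simp add: supp_def)
  finally show "lin (\<lambda>b c. a * delta b c) v c = a * v c" .
qed

lemma qq_nonzero: "qq \<noteq> 0"
  by (simp add: qq_def Zero_fract_def eq_fract)

lemma qmu_nonzero: "qmu \<noteq> 0"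
  by (simp add: qmu_def Zero_fract_def eq_fract)

lemma qq_minus_inverse_nonzero: "qq - inverse qq \<noteq> 0"
proof
  assume "qq - inverse qq = 0"
  then have "qq * qq = 1"
    using qq_nonzero by (simp add: field_simps)
  then have "[:[:0, 1:]:] * [:[:0, 1:]:] = (1 :: complex poly poly)"
    by (simp add: qq_def One_fract_def eq_fract)
  then have "coeff (coeff ([:[:0, 1:]:] * [:[:0, 1:]:]) 0) 0 = coeff (coeff (1 :: complex poly poly) 0) 0"
    by simp
  then show False by simp
qed

text \<open>With u = q^\<mu>, t = q^{k+1}, y = q^i this is [\<mu>+k+1-i] q^i + q^{i-\<mu>-k-1} [i] = [\<mu>+k+1].\<close>

lemma qmuint_add_qint:
  "qmuint (k + 1 - int i) * qq ^ i + qq powi (int i - k - 1) * inverse qmu * qint (int i)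
     = qmuint (k + 1)"
proof -
  have field_identity:
    "((u * (t/y) - inverse (u * (t/y))) / D) * y + (y/t) * inverse u * ((y - inverse y) / D)
       = (u * t - inverse (u * t)) / D"
    if "u \<noteq> 0" "t \<noteq> 0" "y \<noteq> 0" "D \<noteq> 0" for u t y D :: K
    using that by (simp add: field_simps)
  have "qq powi (k + 1 - int i) = qq powi (k + 1) / qq ^ i"
    using power_int_diff[of qq "k + 1" "int i"] qq_nonzero by simp
  moreover have "qq powi (int i - k - 1) = qq ^ i / qq powi (k + 1)"
    using power_int_diff[of qq "int i" "k + 1"] qq_nonzero by (simp add: algebra_simps)
  moreover have "qint (int i) = (qq ^ i - inverse (qq ^ i)) / (qq - inverse qq)"
    by (simp add: qint_def power_int_minus)
  ultimately show ?thesis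
    using field_identity[OF qmu_nonzero _ _ qq_minus_inverse_nonzero, of "qq powi (k + 1)" "qq ^ i"]
      qq_nonzero by (simp add: qmuint_def)
qed

lemma supp_Fbas: "supp (Fbas k (i, w)) \<subseteq> {(i, False # w), (i - 1, True # w)}"
  by (auto simp: supp_def Fbas_def delta_def split: if_splits)

lemma finite_supp_Fbas: "finite (supp (Fbas k b))"
  by (cases b) (auto intro: finite_subset[OF supp_Fbas])

lemma Ebas_Fbas: "lin Ebas (Fbas k b) = (\<lambda>c. qmuint (k + 1) * delta b c)"
proof
  fix c
  obtain i w where b: "b = (i, w)" by fastforce
  define A where "A = qmuint (k + 1 - int i)"
  define B where "B = (if i = 0 then 0 else qq powi (int i - k - 1) * inverse qmu * qint (int i))"
  have key: "A * qq ^ i + B = qmuint (k + 1)"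
    using qmuint_add_qint[of k i] by (cases "i = 0") (simp_all add: A_def B_def)
  have "lin Ebas (Fbas k b) c = A * Ebas (i, False # w) c + B * Ebas (i - 1, True # w) c"
    unfolding b
    by (subst lin_eq_sum_superset[OF _ supp_Fbas]) (simp_all add: Fbas_def delta_def A_def B_def)
  also have "\<dots> = (A * qq ^ i + B) * delta (i, w) c"
    by (cases "i = 0") (simp_all add: B_def algebra_simps)
  finally show "lin Ebas (Fbas k b) c = qmuint (k + 1) * delta b c"
    by (simp add: key b)
qed

lemma finite_supp_Fmap: "finite (supp v) \<Longrightarrow> finite (supp (Fmap k v))"
  unfolding Fmap_def by (rule finite_supp_lin[OF _ finite_supp_Fbas])

lemma Emap_Fmap:
  assumes "finite (supp v)"
  shows "Emap k (Fmap k v) = (\<lambda>c. qmuint (k + 1) * v c)"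
  using assms finite_supp_Fbas
  by (simp add: Emap_def Fmap_def lin_lin Ebas_Fbas lin_scaled_delta)

lemma Fchain_Suc: "Fchain (Suc n) m v = Fchain n m (Fmap (m + int n) v)"
  by (simp add: Fchain_def)

lemma Echain_Suc: "Echain (Suc n) m v = Emap (m + int n) (Echain n m v)"
  by (simp add: Echain_def)

lemma Echain_Fchain:
  assumes "finite (supp v)"
  shows "Echain n m (Fchain n m v) = (\<lambda>b. (\<Prod>k\<in>{1..n}. qmuint (m + int k)) * v b)"
  using assms
proof (induction n arbitrary: v)
  case 0
  then show ?case by (simp add: Echain_def Fchain_def)
next
  case (Suc n)
  let ?P = "\<Prod>k\<in>{1..n}. qmuint (m + int k)"
  have "Echain (Suc n) m (Fchain (Suc n) m v)
      = Emap (m + int n) (\<lambda>b. ?P * Fmap (m + int n) v b)"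
    by (simp add: Echain_Suc Fchain_Suc Suc.IH finite_supp_Fmap Suc.prems)
  also have "\<dots> = (\<lambda>c. ?P * (qmuint (m + int n + 1) * v c))"
    using Emap_Fmap[OF Suc.prems] by (simp add: Emap_def lin_scale)
  also have "\<dots> = (\<lambda>b. (\<Prod>k\<in>{1..Suc n}. qmuint (m + int k)) * v b)"
    by (simp add: atLeastAtMostSuc_conv ac_simps)
  finally show ?case .
qed

theorem mainTheorem4:
  fixes n :: nat and m :: int and v :: vec
  assumes "n \<ge> 1" and "inM v"
  shows "Echain n m (Fchain n m v) = (\<lambda>b. (\<Prod>k\<in>{1..n}. qmuint (m + int k)) * v b)"
  using assms(2) by (intro Echain_Fchain) (simp add: inM_def supp_def)

end
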